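(* Let $N$ be a positive integer and let $E$ and $F$ each be a union of $N$ pairwise disjoint closed (nondegenerate) subarcs of $\mathbb{T}$. If $\hat\chi_E(n)=\hat\chi_F(n)$ for $n=0,1,\dots,N$, then $E=F$.
   Context: $\mathbb{T}$ is the unit circle with normalized Lebesgue measure; $\chi_E$ is the indicator function of $E$, and $\hat f(n)=\frac{1}{2\pi}\int_0^{2\pi} f(e^{i\theta})e^{-in\theta}\,d\theta$. *)

theory Defs
  imports "HOL-Analysis.Analysis"
begin

definition closed_arc :: "complex set \<Rightarrow> bool" where
  "closed_arc A \<longleftrightarrow> (\<exists>a b::real. a < b \<and> b - a < 2 * pi \<and> A = cis ` {a..b})"

definition union_of_disjoint_arcs :: "nat \<Rightarrow> complex set \<Rightarrow> bool" where
  "union_of_disjoint_arcs N E \<longleftrightarrow>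
     (\<exists>A :: nat \<Rightarrow> complex set.
        (\<forall>i<N. closed_arc (A i)) \<and>
        (\<forall>i<N. \<forall>j<N. i \<noteq> j \<longrightarrow> A i \<inter> A j = {}) \<and>
        E = (\<Union>i<N. A i))"

definition fourier_indicator :: "complex set \<Rightarrow> int \<Rightarrow> complex" where
  "fourier_indicator E n =
     (1 / (2 * pi)) * integral {0..2*pi} (\<lambda>\<theta>. indicator E (cis \<theta>) * cis (- (of_int n * \<theta>)))"

end

theory Submission
  imports Defs
begin

text \<open>Let \<open>g = \<chi>\<^sub>F - \<chi>\<^sub>E\<close>. Its Fourier coefficients vanish for \<open>|n| \<le> N\<close> (the negative ones by
  conjugation), so \<open>g\<close> is orthogonal to every trigonometric polynomial of degree \<open>\<le> N\<close>. If the
  arcs of \<open>E\<close> have centres \<open>m\<^sub>i\<close> and half-lengths \<open>h\<^sub>i\<close>, then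
  \<open>T \<theta> = \<Prod>\<^sub>i (cos h\<^sub>i - cos (\<theta> - m\<^sub>i))\<close> is such a polynomial; by disjointness at most one
  factor is nonpositive, so \<open>T \<le> 0\<close> exactly on \<open>E\<close>, with \<open>T < 0\<close> inside the arcs. Hence \<open>g T \<ge> 0\<close>
  and \<open>\<integral> g T = 0\<close>. A point of \<open>E\<close> outside the closed set \<open>F\<close> would give an interval inside an arc
  where \<open>g = -1\<close> and \<open>T < 0\<close>, i.e. \<open>g T > 0\<close>, a contradiction. So \<open>E \<subseteq> F\<close>, and symmetrically.\<close>

lemma cis_in_arc_iff:
  assumes "a < b" "b - a < 2 * pi"
  shows "cis \<theta> \<in> cis ` {a..b} \<longleftrightarrow> cos ((b - a) / 2) \<le> cos (\<theta> - (a + b) / 2)"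
proof -
  define m where "m = (a + b) / 2"
  define h where "h = (b - a) / 2"
  have h: "0 < h" "h < pi" and ab: "a = m - h" "b = m + h"
    using assms by (auto simp: h_def m_def field_simps)
  have cos_le_iff: "cos h \<le> cos \<phi> \<longleftrightarrow> \<bar>\<phi>\<bar> \<le> h" if "\<bar>\<phi>\<bar> \<le> pi" for \<phi>
    using cos_mono_le_eq[of h "\<bar>\<phi>\<bar>"] h that by simp
  show ?thesis unfolding m_def[symmetric] h_def[symmetric]
  proof
    assume "cis \<theta> \<in> cis ` {a..b}"
    then obtain \<phi> where \<phi>: "\<phi> \<in> {a..b}" "cis \<theta> = cis \<phi>" by auto
    have "cos (\<theta> - m) = Re (cis \<theta> * cis (- m))" by (simp add: cis_mult)
    also have "\<dots> = cos (\<phi> - m)" by (simp add: \<phi>(2) cis_mult)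
    finally show "cos h \<le> cos (\<theta> - m)"
      using \<phi>(1) cos_le_iff[of "\<phi> - m"] h by (simp add: ab abs_le_iff)
  next
    assume le: "cos h \<le> cos (\<theta> - m)"
    define \<psi> where "\<psi> = arccos (cos (\<theta> - m))"
    have \<psi>: "0 \<le> \<psi>" "\<psi> \<le> pi" "cos \<psi> = cos (\<theta> - m)"
      unfolding \<psi>_def by (auto intro: arccos_lbound arccos_ubound cos_arccos)
    with le cos_le_iff[of \<psi>] have "\<psi> \<le> h" by simp
    obtain n where "\<theta> - m = \<psi> + 2 * n * pi \<or> \<theta> - m = - \<psi> + 2 * n * pi" and "n \<in> \<int>"
      using \<psi>(3) cos_eq by metis
    then have "\<theta> = (m + \<psi>) + 2 * pi * n \<or> \<theta> = (m - \<psi>) + 2 * pi * n"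
      by (auto simp: algebra_simps)
    then have "cis \<theta> = cis (m + \<psi>) \<or> cis \<theta> = cis (m - \<psi>)"
      using \<open>n \<in> \<int>\<close> by (auto simp flip: cis_mult)
    moreover have "m + \<psi> \<in> {a..b}" "m - \<psi> \<in> {a..b}" using \<open>\<psi> \<le> h\<close> \<psi>(1) by (auto simp: ab)
    ultimately show "cis \<theta> \<in> cis ` {a..b}" by blast
  qed
qed

lemma cos_less_on_arc_interior:
  assumes "\<theta> \<in> {a<..<b}" "b - a < 2 * pi"
  shows "cos ((b - a) / 2) < cos (\<theta> - (a + b) / 2)"
proof -
  have "\<bar>\<theta> - (a + b) / 2\<bar> < (b - a) / 2" using assms(1) by (auto simp: abs_less_iff field_simps)
  then show ?thesis
    using assms cos_monotone_0_pi[of "\<bar>\<theta> - (a + b) / 2\<bar>" "(b - a) / 2"] by simp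
qed

lemma arc_interior_point_outside_closed:
  assumes "closed F" "a < b" "\<theta> \<in> {a..b}" "cis \<theta> \<notin> F"
  obtains \<theta>' where "\<theta>' \<in> {a<..<b}" "cis \<theta>' \<notin> F"
proof -
  have "open (cis -` (- F))"
    using assms(1) by (intro open_vimage continuous_on_cis continuous_on_id) auto
  moreover have "\<theta> \<in> cis -` (- F) \<inter> closure {a<..<b}" using assms(2-4) by simp
  ultimately have "cis -` (- F) \<inter> {a<..<b} \<noteq> {}" using open_Int_closure_eq_empty by blast
  then show ?thesis using that by blast
qed

lemma cis_Arg2pi: "norm z = 1 \<Longrightarrow> cis (Arg2pi z) = z"
  by (metis complex_norm_eq_1_exp cis_conv_exp)

lemma compact_closed_arc: "closed_arc A \<Longrightarrow> compact A"
  unfolding closed_arc_def by (auto intro!: compact_continuous_image continuous_on_cis continuous_on_id)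

lemma compact_union_of_disjoint_arcs: "union_of_disjoint_arcs N E \<Longrightarrow> compact E"
  unfolding union_of_disjoint_arcs_def by (auto intro: compact_closed_arc)

lemma union_of_disjoint_arcsE:
  assumes "union_of_disjoint_arcs N E"
  obtains a b :: "nat \<Rightarrow> real"
  where "E = (\<Union>i<N. cis ` {a i..b i})"
    and "\<And>i. i < N \<Longrightarrow> a i < b i \<and> b i - a i < 2 * pi"
    and "\<And>i j. i < N \<Longrightarrow> j < N \<Longrightarrow> i \<noteq> j \<Longrightarrow> cis ` {a i..b i} \<inter> cis ` {a j..b j} = {}"
proof -
  obtain A where A: "\<forall>i<N. closed_arc (A i)" "\<forall>i<N. \<forall>j<N. i \<noteq> j \<longrightarrow> A i \<inter> A j = {}"
    "E = (\<Union>i<N. A i)"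
    using assms unfolding union_of_disjoint_arcs_def by blast
  have "\<forall>i. \<exists>ab. i < N \<longrightarrow> fst ab < snd ab \<and> snd ab - fst ab < 2 * pi \<and> A i = cis ` {fst ab..snd ab}"
    using A(1) unfolding closed_arc_def by fastforce
  then obtain p where "\<And>i. i < N \<Longrightarrow>
      fst (p i) < snd (p i) \<and> snd (p i) - fst (p i) < 2 * pi \<and> A i = cis ` {fst (p i)..snd (p i)}"
    by metis
  with A show ?thesis by (intro that[of "fst \<circ> p" "snd \<circ> p"]) auto
qed

definition trig_poly :: "nat \<Rightarrow> (real \<Rightarrow> complex) \<Rightarrow> bool" where
  "trig_poly n p \<longleftrightarrow> (\<exists>c. \<forall>\<theta>. p \<theta> = (\<Sum>k = -int n..int n. c k * cis (of_int k * \<theta>)))"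

lemma trig_poly_const_1: "trig_poly 0 (\<lambda>_. 1)"
  unfolding trig_poly_def by (rule exI[of _ "\<lambda>_. 1"]) simp

lemma trig_poly_mult:
  assumes "trig_poly m p" "trig_poly n q"
  shows "trig_poly (m + n) (\<lambda>\<theta>. p \<theta> * q \<theta>)"
proof -
  obtain c d where c: "\<And>\<theta>. p \<theta> = (\<Sum>k = -int m..int m. c k * cis (of_int k * \<theta>))"
    and d: "\<And>\<theta>. q \<theta> = (\<Sum>l = -int n..int n. d l * cis (of_int l * \<theta>))"
    using assms unfolding trig_poly_def by blast
  define K where "K = {-int m..int m} \<times> {-int n..int n}"
  define e where "e j = (\<Sum>kl\<in>{kl\<in>K. fst kl + snd kl = j}. c (fst kl) * d (snd kl))" for j
  have "p \<theta> * q \<theta> = (\<Sum>j = -int (m + n)..int (m + n). e j * cis (of_int j * \<theta>))" for \<theta>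
  proof -
    have "p \<theta> * q \<theta> = (\<Sum>kl\<in>K. c (fst kl) * d (snd kl) * cis (of_int (fst kl + snd kl) * \<theta>))"
      by (simp add: c d K_def sum_product sum.cartesian_product cis_mult algebra_simps case_prod_beta)
    also have "\<dots> = (\<Sum>j = -int (m + n)..int (m + n).
        \<Sum>kl\<in>{kl\<in>K. fst kl + snd kl = j}. c (fst kl) * d (snd kl) * cis (of_int (fst kl + snd kl) * \<theta>))"
      by (rule sum.group[symmetric]) (auto simp: K_def)
    also have "\<dots> = (\<Sum>j = -int (m + n)..int (m + n). e j * cis (of_int j * \<theta>))"
      by (auto simp: e_def sum_distrib_right intro!: sum.cong)
    finally show ?thesis .
  qed
  then show ?thesis unfolding trig_poly_def by blast
qed

lemma trig_poly_prod:
  assumes "finite I" "\<And>i. i \<in> I \<Longrightarrow> trig_poly (n i) (p i)"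
  shows "trig_poly (\<Sum>i\<in>I. n i) (\<lambda>\<theta>. \<Prod>i\<in>I. p i \<theta>)"
  using assms by (induction I rule: finite_induct) (auto intro: trig_poly_const_1 trig_poly_mult)

lemma trig_poly_const_minus_cos:
  "trig_poly 1 (\<lambda>\<theta>. of_real (\<alpha> - cos (\<theta> - m)))"
proof -
  define c where "c k = (if k = 0 then of_real \<alpha> else - cis (- of_int k * m) / 2)" for k :: int
  have "{-1..1::int} = {-1, 0, 1}" by auto
  then have "of_real (\<alpha> - cos (\<theta> - m)) = (\<Sum>k = -int 1..int 1. c k * cis (of_int k * \<theta>))" for \<theta>
    by (simp add: c_def complex_eq_iff cos_diff field_simps)
  then show ?thesis unfolding trig_poly_def by blast
qed

lemma trig_poly_sign_of_arcs:
  fixes a b :: "nat \<Rightarrow> real"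
  assumes ab: "\<And>i. i < N \<Longrightarrow> a i < b i \<and> b i - a i < 2 * pi"
    and disj: "\<And>i j. i < N \<Longrightarrow> j < N \<Longrightarrow> i \<noteq> j \<Longrightarrow> cis ` {a i..b i} \<inter> cis ` {a j..b j} = {}"
  obtains T :: "complex \<Rightarrow> real"
  where "continuous_on UNIV T"
    and "trig_poly N (\<lambda>\<theta>. of_real (T (cis \<theta>)))"
    and "\<And>\<theta>. T (cis \<theta>) \<le> 0 \<longleftrightarrow> cis \<theta> \<in> (\<Union>i<N. cis ` {a i..b i})"
    and "\<And>i \<theta>. i < N \<Longrightarrow> \<theta> \<in> {a i<..<b i} \<Longrightarrow> T (cis \<theta>) < 0"
proof -
  define h where "h i = (b i - a i) / 2" for i
  define m where "m i = (a i + b i) / 2" for i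
  define f where "f i \<theta> = cos (h i) - cos (\<theta> - m i)" for i \<theta>
  define T where "T z = (\<Prod>i<N. cos (h i) - Re (z * cis (- m i)))" for z
  have T_cis: "T (cis \<theta>) = (\<Prod>i<N. f i \<theta>)" for \<theta>
    by (simp add: T_def f_def cis_mult)
  have arc: "cis \<theta> \<in> cis ` {a i..b i} \<longleftrightarrow> f i \<theta> \<le> 0" if "i < N" for i \<theta>
    using cis_in_arc_iff[of "a i" "b i" \<theta>] ab[OF that] by (simp add: f_def h_def m_def)
  have T_split: "T (cis \<theta>) = f j \<theta> * (\<Prod>i\<in>{..<N} - {j}. f i \<theta>)" "(\<Prod>i\<in>{..<N} - {j}. f i \<theta>) > 0"
    if "j < N" "cis \<theta> \<in> cis ` {a j..b j}" for j \<theta>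
  proof -
    show "T (cis \<theta>) = f j \<theta> * (\<Prod>i\<in>{..<N} - {j}. f i \<theta>)"
      using that(1) by (simp add: T_cis prod.remove)
    have "0 < f i \<theta>" if "i \<in> {..<N} - {j}" for i
      using that disj[of i j] arc[of i \<theta>] \<open>j < N\<close> \<open>cis \<theta> \<in> cis ` {a j..b j}\<close> by auto
    then show "(\<Prod>i\<in>{..<N} - {j}. f i \<theta>) > 0" by (rule prod_pos)
  qed
  show ?thesis
  proof
    show "continuous_on UNIV T" unfolding T_def by (intro continuous_intros)
    have "trig_poly 1 (\<lambda>\<theta>. of_real (f i \<theta>))" for i
      unfolding f_def by (rule trig_poly_const_minus_cos)
    from trig_poly_prod[of "{..<N}", OF _ this]
    show "trig_poly N (\<lambda>\<theta>. of_real (T (cis \<theta>)))" by (simp add: T_cis)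
    show "T (cis \<theta>) \<le> 0 \<longleftrightarrow> cis \<theta> \<in> (\<Union>i<N. cis ` {a i..b i})" for \<theta>
    proof
      assume "T (cis \<theta>) \<le> 0"
      then obtain i where "i < N" "f i \<theta> \<le> 0"
        using prod_pos[of "{..<N}" "\<lambda>i. f i \<theta>"] by (force simp: T_cis)
      then show "cis \<theta> \<in> (\<Union>i<N. cis ` {a i..b i})" using arc by blast
    next
      assume "cis \<theta> \<in> (\<Union>i<N. cis ` {a i..b i})"
      then obtain j where "j < N" "cis \<theta> \<in> cis ` {a j..b j}" by blast
      with T_split[OF this] arc[OF this(1)] show "T (cis \<theta>) \<le> 0"
        by (simp add: mult_nonpos_nonneg)
    qed
    show "T (cis \<theta>) < 0" if "i < N" "\<theta> \<in> {a i<..<b i}" for i \<theta>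
    proof -
      have "f i \<theta> < 0"
        using cos_less_on_arc_interior[of \<theta> "a i" "b i"] ab that by (simp add: f_def h_def m_def)
      moreover have "cis \<theta> \<in> cis ` {a i..b i}" using that(2) by auto
      ultimately show ?thesis using T_split[OF that(1)] by (simp add: mult_neg_pos)
    qed
  qed
qed

lemma has_integral_mult_trig_poly_eq_0:
  assumes "trig_poly n p"
    and "\<And>k. \<bar>k\<bar> \<le> int n \<Longrightarrow> ((\<lambda>\<theta>. g \<theta> * cis (of_int k * \<theta>)) has_integral 0) S"
  shows "((\<lambda>\<theta>. g \<theta> * p \<theta>) has_integral 0) S"
proof -
  obtain c where c: "\<And>\<theta>. p \<theta> = (\<Sum>k = -int n..int n. c k * cis (of_int k * \<theta>))"
    using assms(1) unfolding trig_poly_def by blast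
  have "((\<lambda>\<theta>. \<Sum>k = -int n..int n. c k * (g \<theta> * cis (of_int k * \<theta>))) has_integral
          (\<Sum>k = -int n..int n. c k * 0)) S"
    by (intro has_integral_sum has_integral_mult_right assms(2)) auto
  then show ?thesis by (simp add: c sum_distrib_left algebra_simps)
qed

lemma integrable_indicator_cis_mult:
  fixes f :: "real \<Rightarrow> complex"
  assumes "closed S" "continuous_on {a..b} f"
  shows "(\<lambda>\<theta>. indicator S (cis \<theta>) * f \<theta>) integrable_on {a..b}"
proof -
  have "closed (cis -` S \<inter> {a..b})"
    by (intro closed_Int closed_vimage assms(1) continuous_on_cis continuous_on_id) auto
  then have "cis -` S \<inter> {a..b} \<in> sets lebesgue"
    by (metis borel_closed sets_completionI_sets sets_lborel)
  with absolutely_integrable_continuous_real[OF assms(2)] have "f absolutely_integrable_on cis -` S \<inter> {a..b}"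
    by (rule set_integrable_subset) auto
  then have "f integrable_on cis -` S \<inter> {a..b}"
    by (rule set_lebesgue_integral_eq_integral(1))
  then have "(\<lambda>\<theta>. if \<theta> \<in> cis -` S then f \<theta> else 0) integrable_on {a..b}"
    using integrable_restrict_Int by blast
  moreover have "(\<lambda>\<theta>. if \<theta> \<in> cis -` S then f \<theta> else 0) = (\<lambda>\<theta>. indicator S (cis \<theta>) * f \<theta>)"
    by (auto simp: indicator_def)
  ultimately show ?thesis by simp
qed

lemma fourier_indicator_uminus: "fourier_indicator E (- n) = cnj (fourier_indicator E n)"
  unfolding fourier_indicator_def by (auto simp: integral_cnj cis_cnj indicator_def intro!: integral_cong)

lemma has_integral_indicator_diff_mult_trig_poly_eq_0:
  assumes "closed E" "closed F" "trig_poly N p"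
    and "\<And>n. \<bar>n\<bar> \<le> int N \<Longrightarrow> fourier_indicator E n = fourier_indicator F n"
  shows "((\<lambda>\<theta>. (indicator E (cis \<theta>) - indicator F (cis \<theta>)) * p \<theta>) has_integral 0) {0..2 * pi}"
proof (rule has_integral_mult_trig_poly_eq_0[OF assms(3)])
  fix k :: int assume "\<bar>k\<bar> \<le> int N"
  then have "fourier_indicator E (- k) = fourier_indicator F (- k)" by (intro assms(4)) simp
  then have eq: "integral {0..2 * pi} (\<lambda>\<theta>. indicator E (cis \<theta>) * cis (of_int k * \<theta>)) =
      integral {0..2 * pi} (\<lambda>\<theta>. indicator F (cis \<theta>) * cis (of_int k * \<theta>))"
    by (simp add: fourier_indicator_def)
  have int: "(\<lambda>\<theta>. indicator S (cis \<theta>) * cis (of_int k * \<theta>)) integrable_on {0..2 * pi}"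
    if "closed S" for S
    using that by (intro integrable_indicator_cis_mult continuous_intros)
  show "((\<lambda>\<theta>. (indicator E (cis \<theta>) - indicator F (cis \<theta>)) * cis (of_int k * \<theta>)) has_integral 0)
      {0..2 * pi}"
    unfolding left_diff_distrib
    using has_integral_diff[OF int[OF assms(1), THEN integrable_integral]
      int[OF assms(2), THEN integrable_integral]]
    by (simp only: eq diff_self)
qed

lemma has_integral_indicator_diff_mult_real_trig_poly_eq_0:
  fixes t :: "real \<Rightarrow> real"
  assumes "closed E" "closed F" "trig_poly N (\<lambda>\<theta>. of_real (t \<theta>))"
    and "\<And>n. \<bar>n\<bar> \<le> int N \<Longrightarrow> fourier_indicator E n = fourier_indicator F n"
  shows "((\<lambda>\<theta>. (indicator E (cis \<theta>) - indicator F (cis \<theta>)) * t \<theta>) has_integral 0) {0..2 * pi}"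
proof -
  have "((\<lambda>\<theta>. Re ((indicator E (cis \<theta>) - indicator F (cis \<theta>)) * of_real (t \<theta>))) has_integral Re 0)
      {0..2 * pi}"
    using has_integral_indicator_diff_mult_trig_poly_eq_0[OF assms] by (rule has_integral_Re)
  moreover have "Re ((indicator E (cis \<theta>) - indicator F (cis \<theta>)) * of_real (t \<theta>)) =
      (indicator E (cis \<theta>) - indicator F (cis \<theta>)) * t \<theta>" for \<theta>
    by (cases "cis \<theta> \<in> E"; cases "cis \<theta> \<in> F") simp_all
  ultimately show ?thesis by (simp only: zero_complex.sel)
qed

lemma integral_pos_if_continuous_pos_on_open:
  fixes f :: "real \<Rightarrow> real"
  assumes "f integrable_on {a..b}" "\<forall>x\<in>{a..b}. 0 \<le> f x"
    and "open U" "x\<^sub>0 \<in> U" "a \<le> x\<^sub>0" "x\<^sub>0 < b" "continuous_on U f" "\<forall>x\<in>U. 0 < f x"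
  shows "0 < integral {a..b} f"
proof -
  obtain \<delta> where "\<delta> > 0" "ball x\<^sub>0 \<delta> \<subseteq> U" using assms(3,4) by (meson open_contains_ball)
  define d where "d = min (x\<^sub>0 + \<delta> / 2) b"
  have "x\<^sub>0 < d" using \<open>\<delta> > 0\<close> assms(6) by (simp add: d_def)
  have "{x\<^sub>0..d} \<subseteq> ball x\<^sub>0 \<delta>" using \<open>\<delta> > 0\<close> by (auto simp: d_def dist_real_def abs_if)
  with \<open>ball x\<^sub>0 \<delta> \<subseteq> U\<close> have sub_U: "{x\<^sub>0..d} \<subseteq> U" by blast
  have sub_ab: "{x\<^sub>0..d} \<subseteq> {a..b}" using assms(5) by (auto simp: d_def)
  obtain y where y: "y \<in> {x\<^sub>0..d}" "\<And>x. x \<in> {x\<^sub>0..d} \<Longrightarrow> f y \<le> f x"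
    using continuous_attains_inf[of "{x\<^sub>0..d}" f] \<open>x\<^sub>0 < d\<close> continuous_on_subset[OF assms(7) sub_U]
    by auto
  have "0 < f y" using y(1) sub_U assms(8) by blast
  then have "0 < (d - x\<^sub>0) * f y" using \<open>x\<^sub>0 < d\<close> by simp
  also have "\<dots> = integral {x\<^sub>0..d} (\<lambda>_. f y)" using \<open>x\<^sub>0 < d\<close> by simp
  also have "\<dots> \<le> integral {x\<^sub>0..d} f"
    using y integrable_on_subinterval[OF assms(1) sub_ab] by (intro integral_le) auto
  also have "\<dots> \<le> integral {a..b} f"
    using sub_ab assms(1,2) integrable_on_subinterval[OF assms(1) sub_ab] by (intro integral_subset_le) auto
  finally show ?thesis .
qed

lemma subset_if_fourier_indicator_eq:
  assumes E: "union_of_disjoint_arcs N E" and "closed F"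
    and coeff: "\<And>n. \<bar>n\<bar> \<le> int N \<Longrightarrow> fourier_indicator E n = fourier_indicator F n"
  shows "E \<subseteq> F"
proof
  fix x assume "x \<in> E"
  obtain a b where E_eq: "E = (\<Union>i<N. cis ` {a i..b i})"
    and ab: "\<And>i. i < N \<Longrightarrow> a i < b i \<and> b i - a i < 2 * pi"
    and disj: "\<And>i j. i < N \<Longrightarrow> j < N \<Longrightarrow> i \<noteq> j \<Longrightarrow> cis ` {a i..b i} \<inter> cis ` {a j..b j} = {}"
    using union_of_disjoint_arcsE[OF E] by blast
  obtain T :: "complex \<Rightarrow> real" where T_cont: "continuous_on UNIV T"
    and T_poly: "trig_poly N (\<lambda>\<theta>. of_real (T (cis \<theta>)))"
    and T_sign: "\<And>\<theta>. T (cis \<theta>) \<le> 0 \<longleftrightarrow> cis \<theta> \<in> (\<Union>i<N. cis ` {a i..b i})"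
    and T_neg: "\<And>i \<theta>. i < N \<Longrightarrow> \<theta> \<in> {a i<..<b i} \<Longrightarrow> T (cis \<theta>) < 0"
    using trig_poly_sign_of_arcs[of N a b, OF ab disj] by blast
  note T_sign = T_sign[folded E_eq]
  define P where "P \<theta> = (indicator F (cis \<theta>) - indicator E (cis \<theta>)) * T (cis \<theta>)" for \<theta>
  have P_nonneg: "0 \<le> P \<theta>" for \<theta>
    using T_sign[of \<theta>] by (auto simp: P_def indicator_def mult_nonpos_nonpos)
  have "closed E" using E by (intro compact_imp_closed compact_union_of_disjoint_arcs)
  from \<open>closed F\<close> this T_poly coeff[symmetric] have P_integral: "(P has_integral 0) {0..2 * pi}"
    unfolding P_def by (rule has_integral_indicator_diff_mult_real_trig_poly_eq_0)
  show "x \<in> F"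
  proof (rule ccontr)
    assume "x \<notin> F"
    obtain j \<theta>\<^sub>1 where j: "j < N" "\<theta>\<^sub>1 \<in> {a j..b j}" "x = cis \<theta>\<^sub>1" using \<open>x \<in> E\<close> E_eq by auto
    obtain \<theta>\<^sub>2 where \<theta>\<^sub>2: "\<theta>\<^sub>2 \<in> {a j<..<b j}" "cis \<theta>\<^sub>2 \<notin> F"
      using arc_interior_point_outside_closed[OF \<open>closed F\<close> _ j(2)] ab[OF j(1)] j(3) \<open>x \<notin> F\<close> by blast
    define \<theta>\<^sub>0 where "\<theta>\<^sub>0 = Arg2pi (cis \<theta>\<^sub>2)"
    have "cis \<theta>\<^sub>0 = cis \<theta>\<^sub>2" by (simp add: \<theta>\<^sub>0_def cis_Arg2pi)
    define U where "U = cis -` ({z. T z < 0} - F)"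
    have "open U" unfolding U_def using T_cont \<open>closed F\<close>
      by (intro open_vimage open_Diff open_Collect_less continuous_on_cis continuous_on_id) auto
    have "\<theta>\<^sub>0 \<in> U" using T_neg[OF j(1) \<theta>\<^sub>2(1)] \<theta>\<^sub>2(2) \<open>cis \<theta>\<^sub>0 = cis \<theta>\<^sub>2\<close> by (simp add: U_def)
    have P_U: "P \<theta> = - T (cis \<theta>)" if "\<theta> \<in> U" for \<theta>
      using that T_sign[of \<theta>] by (simp add: U_def P_def)
    have "continuous_on U (\<lambda>\<theta>. - T (cis \<theta>))"
      by (intro continuous_on_minus continuous_on_compose2[OF T_cont] continuous_on_cis continuous_on_id) auto
    then have "continuous_on U P" using P_U by (simp cong: continuous_on_cong)
    moreover have "\<forall>\<theta>\<in>U. 0 < P \<theta>" using P_U by (simp add: U_def)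
    ultimately have "0 < integral {0..2 * pi} P"
      using P_integral P_nonneg \<open>open U\<close> \<open>\<theta>\<^sub>0 \<in> U\<close> Arg2pi_ge_0 Arg2pi_lt_2pi
      by (intro integral_pos_if_continuous_pos_on_open[of _ _ _ U \<theta>\<^sub>0]) (auto simp: \<theta>\<^sub>0_def)
    with P_integral show False by (simp add: integral_unique)
  qed
qed

theorem corollary5p3:
  fixes N :: nat and E F :: "complex set"
  assumes "N > 0"
    and "union_of_disjoint_arcs N E"
    and "union_of_disjoint_arcs N F"
    and "\<forall>n::int. 0 \<le> n \<and> n \<le> int N \<longrightarrow> fourier_indicator E n = fourier_indicator F n"
  shows "E = F"
proof -
  have coeff: "fourier_indicator E n = fourier_indicator F n" if "\<bar>n\<bar> \<le> int N" for n
  proof (cases "0 \<le> n")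
    case True
    with assms(4) that show ?thesis by simp
  next
    case False
    with assms(4) that have "fourier_indicator E (- n) = fourier_indicator F (- n)" by simp
    then show ?thesis using fourier_indicator_uminus[of _ "- n"] by simp
  qed
  have "closed E" "closed F"
    using assms(2,3) by (auto intro: compact_imp_closed compact_union_of_disjoint_arcs)
  show ?thesis
  proof
    show "E \<subseteq> F" using assms(2) \<open>closed F\<close> coeff by (rule subset_if_fourier_indicator_eq)
    show "F \<subseteq> E" using assms(3) \<open>closed E\<close> coeff[symmetric] by (rule subset_if_fourier_indicator_eq)
  qed
qed

end
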